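(* Let $H\in\mathbb{R}^{n\times d}$ have rank $h$, let $\Sigma\in\mathbb{R}^{n\times n}$ be symmetric positive definite, let $y\in\mathbb{R}^n$, $J\ge 2$, and let $v_0^{(1)},\dots,v_0^{(J)}\in\mathbb{R}^d$ be an initial ensemble. Run deterministic EKI: $$v_{i+1}^{(j)}=v_i^{(j)}+\Gamma_iH^\top(H\Gamma_iH^\top+\Sigma)^{-1}(y-Hv_i^{(j)}),\quad j=1,\dots,J,\ i\ge 0,$$ where $\Gamma_i$ is the empirical covariance of $v_i^{(1)},\dots,v_i^{(J)}$. Let $\theta_i^{(j)}=Hv_i^{(j)}-y$ and let $\mathcal{P},\mathcal{Q},\mathcal{N}$ be the projectors defined in the context. Then for every particle $j=1,\dots,J$: (a) $\|\mathcal{P}\theta_i^{(j)}\|=\mathcal{O}(i^{-1/2})$ as $i\to\infty$; (b) $\mathcal{Q}\theta_i^{(j)}=\mathcal{Q}\theta_0^{(j)}$ for all $i\ge 0$; (c) $\mathcal{N}\theta_i^{(j)}=\mathcal{N}\theta_0^{(j)}$ for all $i\ge 0$.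
   Context: Empirical covariance: $\Gamma_i=\frac{1}{J-1}\sum_{j=1}^J(v_i^{(j)}-\bar v_i)(v_i^{(j)}-\bar v_i)^\top$ with $\bar v_i=\frac1J\sum_j v_i^{(j)}$. Let $r$ be the number of positive eigenvalues of the generalized eigenvalue problem $H\Gamma_0H^\top w=\delta\,\Sigma w$. Let $w_1,\dots,w_n\in\mathbb{R}^n$ be a basis of $\mathbb{R}^n$ with $w_k^\top\Sigma w_l=1$ if $k=l$ and $0$ otherwise, such that: each $w_\ell$ is a generalized eigenvector of the pencil $(H\Gamma_iH^\top,\Sigma)$ for every $i\ge0$; $w_1,\dots,w_r\in\mathsf{Ran}(\Sigma^{-1}H)$ correspond to positive eigenvalues; $w_{r+1},\dots,w_h\in\mathsf{Ran}(\Sigma^{-1}H)$ correspond to the eigenvalue zero; $w_{h+1},\dots,w_n$ form a basis of $\mathsf{Ker}(H^\top)$; and $\mathsf{span}(w_1,\dots,w_h)=\mathsf{Ran}(\Sigma^{-1}H)$. With $W=[w_1,\dots,w_n]$ and $W_{k:l}$ its columns $k$ through $l$, define $\mathcal{P}=\Sigma W_{1:r}W_{1:r}^\top$, $\mathcal{Q}=\Sigma W_{r+1:h}W_{r+1:h}^\top$, $\mathcal{N}=\Sigma W_{h+1:n}W_{h+1:n}^\top$. *)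

theory Defs
  imports "HOL-Analysis.Analysis" "HOL-Library.Landau_Symbols"
begin

definition outer :: "real^'m \<Rightarrow> real^'k \<Rightarrow> real^'k^'m" where
  "outer u v = (\<chi> a b. u $ a * v $ b)"

definition ens_mean :: "nat \<Rightarrow> (nat \<Rightarrow> real^'d) \<Rightarrow> real^'d" where
  "ens_mean J v = (1 / real J) *\<^sub>R (\<Sum>j=1..J. v j)"

definition emp_cov :: "nat \<Rightarrow> (nat \<Rightarrow> real^'d) \<Rightarrow> real^'d^'d" where
  "emp_cov J v = (1 / (real J - 1)) *\<^sub>R
     (\<Sum>j=1..J. outer (v j - ens_mean J v) (v j - ens_mean J v))"

definition eki_step :: "real^'d^'n \<Rightarrow> real^'n^'n \<Rightarrow> real^'n \<Rightarrow> nat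
    \<Rightarrow> (nat \<Rightarrow> real^'d) \<Rightarrow> (nat \<Rightarrow> real^'d)" where
  "eki_step H S y J v = (let G = emp_cov J v in
     (\<lambda>j. v j + (G ** transpose H ** matrix_inv (H ** G ** transpose H + S)) *v (y - H *v v j)))"

primrec eki :: "real^'d^'n \<Rightarrow> real^'n^'n \<Rightarrow> real^'n \<Rightarrow> nat
    \<Rightarrow> (nat \<Rightarrow> real^'d) \<Rightarrow> nat \<Rightarrow> (nat \<Rightarrow> real^'d)" where
  "eki H S y J v0 0 = v0"
| "eki H S y J v0 (Suc i) = eki_step H S y J (eki H S y J v0 i)"

definition eki_cov :: "real^'d^'n \<Rightarrow> real^'n^'n \<Rightarrow> real^'n \<Rightarrow> nat
    \<Rightarrow> (nat \<Rightarrow> real^'d) \<Rightarrow> nat \<Rightarrow> real^'d^'d" where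
  "eki_cov H S y J v0 i = emp_cov J (eki H S y J v0 i)"

text \<open>Sigma W_{a+1:b} W_{a+1:b}^T for the basis w_0,...,w_{n-1} (0-based indexing).\<close>
definition proj_block :: "real^'n^'n \<Rightarrow> (nat \<Rightarrow> real^'n) \<Rightarrow> nat \<Rightarrow> nat \<Rightarrow> real^'n^'n" where
  "proj_block S w a b = S ** (\<Sum>k\<in>{a..<b}. outer (w k) (w k))"

definition sym_pos_def :: "real^'n^'n \<Rightarrow> bool" where
  "sym_pos_def S \<longleftrightarrow> transpose S = S \<and> (\<forall>x. x \<noteq> 0 \<longrightarrow> x \<bullet> (S *v x) > 0)"

end

theory Submission
  imports Defs
begin

text \<open>In the \<Sigma>-orthonormal basis w everything is diagonal. Writing M_i = H \<Gamma>_i H^T and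
  X_i = (M_i + \<Sigma>)^{-1}, one EKI step maps the residual \<theta>_i to \<Sigma> X_i \<theta>_i and M_i to
  \<Sigma> X_i M_i X_i \<Sigma>. Hence, if \<delta>_i is the eigenvalue of w_k, the coefficient c_i = w_k^T \<theta>_i
  obeys c_{i+1} = c_i / (1 + \<delta>_i) and \<delta>_{i+1} = \<delta>_i / (1 + \<delta>_i)^2. A zero eigenvalue stays
  zero and freezes the coefficient, which gives (b) and (c). A positive one satisfies
  1/\<delta>_{i+1} \<ge> 1/\<delta>_i + 2 while c_i^2/\<delta>_i is invariant, so c_i^2 = O(1/i), which gives (a).\<close>

lemma invertible_matrix_inv:
  fixes A :: "'a::semiring_1^'n^'n"
  assumes "invertible A"
  shows "A ** matrix_inv A = mat 1" "matrix_inv A ** A = mat 1"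
  using someI_ex[OF assms[unfolded invertible_def]] unfolding matrix_inv_def by auto

lemma matrix_vector_mult_inner:
  fixes A :: "real^'n^'m"
  shows "(A *v y) \<bullet> x = y \<bullet> (transpose A *v x)"
  by (metis dot_lmul_matrix inner_commute transpose_matrix_vector)

lemma sum_matrix_vector_mult:
  fixes f :: "'a \<Rightarrow> real^'n^'m"
  shows "sum f A *v x = (\<Sum>a\<in>A. f a *v x)"
  by (induction A rule: infinite_finite_induct) (auto simp: matrix_vector_mult_add_rdistrib)

lemma matrix_vector_mult_sum:
  fixes M :: "real^'n^'m"
  shows "M *v sum f A = (\<Sum>a\<in>A. M *v f a)"
  by (induction A rule: infinite_finite_induct) (auto simp: matrix_vector_right_distrib)

lemma outer_mult_vector: "outer u v *v x = (v \<bullet> x) *\<^sub>R u"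
  by (simp add: vec_eq_iff outer_def matrix_vector_mult_def inner_vec_def
      sum_distrib_left sum_distrib_right ac_simps)

lemma sym_pos_def_invertible:
  fixes A :: "real^'n^'n"
  assumes "sym_pos_def A"
  shows "invertible A"
proof -
  have "A *v x = 0 \<Longrightarrow> x = 0" for x
    using assms unfolding sym_pos_def_def by (metis inner_zero_right less_irrefl)
  then show ?thesis
    using invertible_left_inverse matrix_left_invertible_ker by blast
qed

lemma sym_pos_def_matrix_inv:
  fixes A :: "real^'n^'n"
  assumes "sym_pos_def A"
  shows "A ** matrix_inv A = mat 1" "matrix_inv A ** A = mat 1"
    and "transpose (matrix_inv A) = matrix_inv A"
proof -
  show right: "A ** matrix_inv A = mat 1" and left: "matrix_inv A ** A = mat 1"
    using invertible_matrix_inv sym_pos_def_invertible[OF assms] by auto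
  have A_sym: "transpose A = A"
    using assms unfolding sym_pos_def_def by simp
  have "transpose (matrix_inv A) = matrix_inv A ** A ** transpose (matrix_inv A)"
    by (simp add: left)
  also have "\<dots> = matrix_inv A ** transpose (matrix_inv A ** A)"
    by (simp add: matrix_transpose_mul A_sym matrix_mul_assoc)
  also have "\<dots> = matrix_inv A"
    by (simp add: left)
  finally show "transpose (matrix_inv A) = matrix_inv A" .
qed

lemma sym_pos_def_add_psd:
  fixes M S :: "real^'n^'n"
  assumes "sym_pos_def S" and "transpose M = M" and "\<And>x. 0 \<le> x \<bullet> (M *v x)"
  shows "sym_pos_def (M + S)"
proof -
  have "transpose (M + S) = transpose M + transpose S"
    by (simp add: vec_eq_iff transpose_def)
  with assms show ?thesis
    unfolding sym_pos_def_def
    by (auto simp: matrix_vector_mult_add_rdistrib inner_add_right add_nonneg_pos)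
qed

lemma emp_cov_mult_vector:
  "emp_cov J v *v x =
     (1 / (real J - 1)) *\<^sub>R (\<Sum>j=1..J. ((v j - ens_mean J v) \<bullet> x) *\<^sub>R (v j - ens_mean J v))"
  unfolding emp_cov_def
  by (simp add: scaleR_matrix_vector_assoc[symmetric] sum_matrix_vector_mult outer_mult_vector)

lemma emp_cov_symmetric: "transpose (emp_cov J v) = emp_cov J v"
  by (simp add: vec_eq_iff emp_cov_def transpose_def outer_def mult.commute)

lemma emp_cov_psd: "0 \<le> x \<bullet> (emp_cov J v *v x)"
proof -
  have "x \<bullet> (emp_cov J v *v x)
      = (1 / (real J - 1)) * (\<Sum>j=1..J. ((v j - ens_mean J v) \<bullet> x)\<^sup>2)"
    by (simp add: emp_cov_mult_vector inner_sum_right power2_eq_square inner_commute)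
  then show ?thesis
    by (cases J) (simp_all add: sum_nonneg)
qed

lemma ens_mean_affine:
  fixes B :: "real^'d^'e"
  assumes "J \<ge> 1"
  shows "ens_mean J (\<lambda>j. B *v v j + b) = B *v ens_mean J v + b"
proof -
  have "(\<Sum>j=1..J. B *v v j + b) = B *v (\<Sum>j=1..J. v j) + real J *\<^sub>R b"
    by (simp only: sum.distrib matrix_vector_mult_sum sum_constant_scaleR card_atLeastAtMost) simp
  then show ?thesis
    using assms by (simp add: ens_mean_def matrix_vector_mult_scaleR scaleR_add_right)
qed

lemma emp_cov_affine:
  fixes B :: "real^'d^'e"
  assumes "J \<ge> 1"
  shows "emp_cov J (\<lambda>j. B *v v j + b) = B ** emp_cov J v ** transpose B"
proof -
  have dev: "B *v v j + b - ens_mean J (\<lambda>j. B *v v j + b) = B *v (v j - ens_mean J v)" for j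
    using ens_mean_affine[OF assms, of B v b] by (simp add: matrix_vector_mult_diff_distrib)
  show ?thesis
    unfolding matrix_eq
    by (simp add: matrix_vector_mul_assoc[symmetric] emp_cov_mult_vector dev
        matrix_vector_mult_scaleR matrix_vector_mult_sum matrix_vector_mult_inner)
qed

lemma congruence_symmetric:
  fixes H :: "real^'d^'n"
  assumes "transpose G = G"
  shows "transpose (H ** G ** transpose H) = H ** G ** transpose H"
  using assms by (simp add: matrix_transpose_mul matrix_mul_assoc)

lemma congruence_psd:
  fixes H :: "real^'d^'n"
  assumes "\<And>z. 0 \<le> z \<bullet> (G *v z)"
  shows "0 \<le> x \<bullet> ((H ** G ** transpose H) *v x)"
proof -
  have "x \<bullet> ((H ** G ** transpose H) *v x)
      = (transpose H *v x) \<bullet> (G *v (transpose H *v x))"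
    by (metis inner_commute matrix_vector_mult_inner matrix_vector_mul_assoc)
  then show ?thesis
    using assms by simp
qed

lemma innovation_cov_sym_pos_def:
  assumes "sym_pos_def S"
  shows "sym_pos_def (H ** emp_cov J v ** transpose H + S)"
  using sym_pos_def_add_psd[OF assms congruence_symmetric[OF emp_cov_symmetric]
      congruence_psd[OF emp_cov_psd]] .

lemma right_inverse_complement:
  fixes M S X :: "real^'n^'n"
  assumes "(M + S) ** X = mat 1"
  shows "z - M *v (X *v z) = S *v (X *v z)"
proof -
  have "M *v (X *v z) + S *v (X *v z) = z"
    using arg_cong[OF assms, of "\<lambda>A. A *v z"]
    by (simp add: matrix_vector_mul_assoc[symmetric] matrix_vector_mult_add_rdistrib)
  then show ?thesis
    by (simp add: algebra_simps)
qed

lemma eki_step_residual: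
  fixes H :: "real^'d^'n" and S :: "real^'n^'n" and J :: nat and v :: "nat \<Rightarrow> real^'d"
  assumes S_spd: "sym_pos_def S"
  defines "X \<equiv> matrix_inv (H ** emp_cov J v ** transpose H + S)"
  shows "H *v eki_step H S y J v j - y = S *v (X *v (H *v v j - y))"
proof -
  let ?M = "H ** emp_cov J v ** transpose H"
  have "H *v eki_step H S y J v j - y = (H *v v j - y) - ?M *v (X *v (H *v v j - y))"
    unfolding eki_step_def Let_def X_def
    by (simp add: matrix_vector_right_distrib matrix_vector_mul_assoc matrix_mul_assoc
        algebra_simps)
  also have "\<dots> = S *v (X *v (H *v v j - y))"
    using right_inverse_complement
      sym_pos_def_matrix_inv(1)[OF innovation_cov_sym_pos_def[OF S_spd]]
    unfolding X_def by blast
  finally show ?thesis .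
qed

lemma eki_step_pred_cov:
  fixes H :: "real^'d^'n" and S :: "real^'n^'n" and J :: nat and v :: "nat \<Rightarrow> real^'d"
  assumes S_spd: "sym_pos_def S" and J: "J \<ge> 1"
  defines "M \<equiv> H ** emp_cov J v ** transpose H"
    and "X \<equiv> matrix_inv (H ** emp_cov J v ** transpose H + S)"
  shows "H ** emp_cov J (eki_step H S y J v) ** transpose H = S ** X ** M ** X ** S"
proof -
  define K where "K = emp_cov J v ** transpose H ** X"
  have inv: "(M + S) ** X = mat 1" and X_sym: "transpose X = X"
    using sym_pos_def_matrix_inv[OF innovation_cov_sym_pos_def[OF S_spd, of H J v]]
    unfolding M_def X_def by auto
  have S_sym: "transpose S = S"
    using S_spd unfolding sym_pos_def_def by simp
  have affine: "eki_step H S y J v = (\<lambda>j. (mat 1 - K ** H) *v v j + K *v y)"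
    unfolding eki_step_def Let_def K_def X_def
    by (simp add: fun_eq_iff matrix_vector_mult_diff_distrib matrix_vector_mult_diff_rdistrib
        matrix_vector_mul_assoc)
  have HB: "H ** (mat 1 - K ** H) = S ** X ** H"
    unfolding matrix_eq
    using right_inverse_complement[OF inv]
    by (simp add: K_def M_def matrix_vector_mult_diff_rdistrib matrix_vector_mult_diff_distrib
        matrix_vector_mul_assoc[symmetric])
  have "H ** emp_cov J (eki_step H S y J v) ** transpose H
      = (H ** (mat 1 - K ** H)) ** emp_cov J v ** transpose (H ** (mat 1 - K ** H))"
    unfolding affine emp_cov_affine[OF J] by (simp add: matrix_transpose_mul matrix_mul_assoc)
  also have "\<dots> = S ** X ** M ** X ** S"
    unfolding HB M_def by (simp add: matrix_transpose_mul matrix_mul_assoc X_sym S_sym)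
  finally show ?thesis .
qed

lemma inverse_eigenvector:
  fixes M S X :: "real^'n^'n"
  assumes inv: "X ** (M + S) = mat 1" and eig: "M *v w = d *\<^sub>R (S *v w)"
  shows "X *v (S *v w) = (1 / (1 + d)) *\<^sub>R w"
proof -
  have w: "w = (1 + d) *\<^sub>R (X *v (S *v w))"
    using arg_cong[OF inv, of "\<lambda>A. A *v w"] eig
    by (simp add: matrix_vector_mul_assoc[symmetric] matrix_vector_mult_add_rdistrib
        matrix_vector_mult_scaleR algebra_simps)
  show ?thesis
  proof (cases "1 + d = 0")
    case True
    with w show ?thesis by simp
  next
    case False
    with arg_cong[OF w, of "scaleR (1 / (1 + d))"] show ?thesis by simp
  qed
qed

lemma eki_step_eigen:
  fixes H :: "real^'d^'n" and S :: "real^'n^'n" and J :: nat and v :: "nat \<Rightarrow> real^'d"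
  assumes S_spd: "sym_pos_def S" and J: "J \<ge> 1"
    and eig: "(H ** emp_cov J v ** transpose H) *v w = d *\<^sub>R (S *v w)"
  shows "w \<bullet> (H *v eki_step H S y J v j - y) = w \<bullet> (H *v v j - y) / (1 + d)"
    and "(H ** emp_cov J (eki_step H S y J v) ** transpose H) *v w
      = (d / (1 + d)\<^sup>2) *\<^sub>R (S *v w)"
proof -
  define M where "M = H ** emp_cov J v ** transpose H"
  define X where "X = matrix_inv (H ** emp_cov J v ** transpose H + S)"
  have inv: "X ** (M + S) = mat 1" and X_sym: "transpose X = X"
    using sym_pos_def_matrix_inv[OF innovation_cov_sym_pos_def[OF S_spd, of H J v]]
    unfolding M_def X_def by auto
  have S_sym: "transpose S = S"
    using S_spd unfolding sym_pos_def_def by simp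
  have XSw: "X *v (S *v w) = (1 / (1 + d)) *\<^sub>R w"
    using inverse_eigenvector[OF inv] eig unfolding M_def by blast
  have "w \<bullet> (S *v (X *v u)) = (X *v (S *v w)) \<bullet> u" for u
    by (metis S_sym X_sym inner_commute matrix_vector_mult_inner)
  then show "w \<bullet> (H *v eki_step H S y J v j - y) = w \<bullet> (H *v v j - y) / (1 + d)"
    unfolding eki_step_residual[OF S_spd] X_def[symmetric] XSw by simp
  have "(S ** X ** M ** X ** S) *v w = (1 / (1 + d)) *\<^sub>R (S *v (X *v (M *v w)))"
    by (simp add: matrix_vector_mul_assoc[symmetric] XSw matrix_vector_mult_scaleR)
  also have "\<dots> = (d / (1 + d)\<^sup>2) *\<^sub>R (S *v w)"
    by (simp add: eig[folded M_def] XSw matrix_vector_mult_scaleR power2_eq_square)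
  finally show "(H ** emp_cov J (eki_step H S y J v) ** transpose H) *v w
      = (d / (1 + d)\<^sup>2) *\<^sub>R (S *v w)"
    unfolding eki_step_pred_cov[OF S_spd J] M_def X_def .
qed

lemma eki_eigen_recursion:
  fixes H :: "real^'d^'n" and S :: "real^'n^'n" and J j :: nat and v0 :: "nat \<Rightarrow> real^'d"
  assumes S_spd: "sym_pos_def S" and J: "J \<ge> 1" and normalized: "w \<bullet> (S *v w) = 1"
    and eig: "\<And>i. \<exists>\<delta>. (H ** eki_cov H S y J v0 i ** transpose H) *v w = \<delta> *\<^sub>R (S *v w)"
  defines "\<delta> \<equiv> \<lambda>i. w \<bullet> ((H ** eki_cov H S y J v0 i ** transpose H) *v w)"
    and "c \<equiv> \<lambda>i. w \<bullet> (H *v eki H S y J v0 i j - y)"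
  shows "\<delta> (Suc i) = \<delta> i / (1 + \<delta> i)\<^sup>2" and "c (Suc i) = c i / (1 + \<delta> i)"
proof -
  obtain d
    where d: "(H ** emp_cov J (eki H S y J v0 i) ** transpose H) *v w = d *\<^sub>R (S *v w)"
    using eig unfolding eki_cov_def by blast
  then have "\<delta> i = d"
    unfolding \<delta>_def eki_cov_def using normalized by simp
  then show "\<delta> (Suc i) = \<delta> i / (1 + \<delta> i)\<^sup>2" and "c (Suc i) = c i / (1 + \<delta> i)"
    using eki_step_eigen[OF S_spd J d] normalized
    unfolding \<delta>_def c_def eki_cov_def by simp_all
qed

lemma coefficient_frozen:
  fixes \<delta> c :: "nat \<Rightarrow> real"
  assumes \<delta>_rec: "\<And>i. \<delta> (Suc i) = \<delta> i / (1 + \<delta> i)\<^sup>2"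
    and c_rec: "\<And>i. c (Suc i) = c i / (1 + \<delta> i)"
    and "\<delta> 0 = 0"
  shows "c i = c 0"
proof -
  have "\<delta> i = 0" for i
    by (induction i) (simp_all add: \<delta>_rec \<open>\<delta> 0 = 0\<close>)
  then show ?thesis
    by (induction i) (simp_all add: c_rec)
qed

lemma coefficient_decay:
  fixes \<delta> c :: "nat \<Rightarrow> real"
  assumes \<delta>_rec: "\<And>i. \<delta> (Suc i) = \<delta> i / (1 + \<delta> i)\<^sup>2"
    and c_rec: "\<And>i. c (Suc i) = c i / (1 + \<delta> i)"
    and "\<delta> 0 > 0"
  shows "c \<in> O(\<lambda>i. 1 / sqrt (real i))"
proof -
  define K where "K = (c 0)\<^sup>2 / \<delta> 0"
  have pos: "\<delta> i > 0" for i
    by (induction i) (simp_all add: \<delta>_rec \<open>\<delta> 0 > 0\<close>)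
  have growth: "2 * real i \<le> 1 / \<delta> i" for i
  proof (induction i)
    case (Suc i)
    have "1 / \<delta> (Suc i) = 1 / \<delta> i + 2 + \<delta> i"
      using pos[of i] by (simp add: \<delta>_rec field_simps power2_eq_square)
    with Suc pos[of i] show ?case by simp
  qed (simp add: less_imp_le[OF pos])
  have invariant: "(c i)\<^sup>2 = K * \<delta> i" for i
  proof (induction i)
    case (Suc i)
    then show ?case
      using pos[of i] by (simp add: \<delta>_rec c_rec power_divide)
  qed (simp add: K_def less_imp_neq[OF pos, symmetric])
  have bound: "\<bar>c i\<bar> \<le> sqrt K * (1 / sqrt (real i))" if "i \<ge> 1" for i
  proof -
    have "\<delta> i \<le> 1 / real i"
      using growth[of i] pos[of i] that by (simp add: field_simps)
    then have "(c i)\<^sup>2 \<le> K / real i"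
      unfolding invariant using \<open>\<delta> 0 > 0\<close>
      by (simp add: K_def divide_inverse mult_left_mono)
    then have "sqrt ((c i)\<^sup>2) \<le> sqrt (K / real i)"
      by (rule real_sqrt_le_mono)
    then show ?thesis
      by (simp add: real_sqrt_divide)
  qed
  show ?thesis
  proof (rule bigoI[where c = "sqrt K"])
    show "\<forall>\<^sub>F i in at_top. norm (c i) \<le> sqrt K * norm (1 / sqrt (real i))"
      using bound unfolding eventually_at_top_linorder by auto
  qed
qed

lemma eki_coefficient_decay:
  fixes H :: "real^'d^'n" and S :: "real^'n^'n" and J j :: nat and v0 :: "nat \<Rightarrow> real^'d"
  assumes S_spd: "sym_pos_def S" and J: "J \<ge> 1" and normalized: "w \<bullet> (S *v w) = 1"
    and eig: "\<And>i. \<exists>\<delta>. (H ** eki_cov H S y J v0 i ** transpose H) *v w = \<delta> *\<^sub>R (S *v w)"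
    and eig0: "(H ** eki_cov H S y J v0 0 ** transpose H) *v w = d *\<^sub>R (S *v w)" and "d > 0"
  shows "(\<lambda>i. w \<bullet> (H *v eki H S y J v0 i j - y)) \<in> O(\<lambda>i. 1 / sqrt (real i))"
  by (rule coefficient_decay[where
        \<delta> = "\<lambda>i. w \<bullet> ((H ** eki_cov H S y J v0 i ** transpose H) *v w)"])
    (simp_all del: eki.simps(2)
      add: eki_eigen_recursion[OF S_spd J normalized eig] eig0 normalized \<open>d > 0\<close>)

lemma eki_coefficient_frozen:
  fixes H :: "real^'d^'n" and S :: "real^'n^'n" and J j :: nat and v0 :: "nat \<Rightarrow> real^'d"
  assumes S_spd: "sym_pos_def S" and J: "J \<ge> 1" and normalized: "w \<bullet> (S *v w) = 1"
    and eig: "\<And>i. \<exists>\<delta>. (H ** eki_cov H S y J v0 i ** transpose H) *v w = \<delta> *\<^sub>R (S *v w)"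
    and eig0: "(H ** eki_cov H S y J v0 0 ** transpose H) *v w = 0"
  shows "w \<bullet> (H *v eki H S y J v0 i j - y) = w \<bullet> (H *v v0 j - y)"
  using coefficient_frozen[where
      \<delta> = "\<lambda>i. w \<bullet> ((H ** eki_cov H S y J v0 i ** transpose H) *v w)"
      and c = "\<lambda>i. w \<bullet> (H *v eki H S y J v0 i j - y)"]
  by (simp del: eki.simps(2) add: eki_eigen_recursion[OF S_spd J normalized eig] eig0)

lemma norm_sum_scaleR_bigo:
  fixes u :: "'k \<Rightarrow> 'v::real_normed_vector" and g :: "'a \<Rightarrow> real"
  assumes "\<And>k. k \<in> A \<Longrightarrow> (\<lambda>i. c i k) \<in> O[F](g)"
  shows "(\<lambda>i. norm (\<Sum>k\<in>A. c i k *\<^sub>R u k)) \<in> O[F](g)"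
proof (rule landau_o.big_trans)
  show "(\<lambda>i. norm (\<Sum>k\<in>A. c i k *\<^sub>R u k)) \<in> O[F](\<lambda>i. \<Sum>k\<in>A. \<bar>c i k\<bar> * norm (u k))"
    by (intro landau_o.big_mono always_eventually allI)
      (simp add: sum_nonneg order_trans[OF norm_sum])
  show "(\<lambda>i. \<Sum>k\<in>A. \<bar>c i k\<bar> * norm (u k)) \<in> O[F](g)"
    by (intro big_sum_in_bigo) (auto simp: assms)
qed

lemma proj_block_mult_vector:
  "proj_block S w a b *v x = (\<Sum>k\<in>{a..<b}. (w k \<bullet> x) *\<^sub>R (S *v w k))"
  unfolding proj_block_def
  by (simp add: matrix_vector_mul_assoc[symmetric] sum_matrix_vector_mult outer_mult_vector
      matrix_vector_mult_sum matrix_vector_mult_scaleR)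

theorem theorem3p8:
  fixes H :: "real^'d^'n" and S :: "real^'n^'n" and y :: "real^'n"
    and J :: nat and v0 :: "nat \<Rightarrow> real^'d"
    and w :: "nat \<Rightarrow> real^'n" and r h :: nat
  assumes SPD: "sym_pos_def S"
    and J2: "J \<ge> 2"
    and rankH: "rank H = h"
    and rh: "r \<le> h" and hn: "h \<le> CARD('n)"
    and orth: "\<And>k l. k < CARD('n) \<Longrightarrow> l < CARD('n) \<Longrightarrow>
                 w k \<bullet> (S *v w l) = (if k = l then 1 else 0)"
    and eig_all: "\<And>k i. k < CARD('n) \<Longrightarrow>
                 \<exists>\<delta>. (H ** eki_cov H S y J v0 i ** transpose H) *v w k = \<delta> *\<^sub>R (S *v w k)"
    and pos: "\<And>k. k < r \<Longrightarrow> w k \<in> range (\<lambda>x. matrix_inv S *v (H *v x)) \<and>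
                 (\<exists>\<delta>>0. (H ** eki_cov H S y J v0 0 ** transpose H) *v w k = \<delta> *\<^sub>R (S *v w k))"
    and zero: "\<And>k. r \<le> k \<Longrightarrow> k < h \<Longrightarrow> w k \<in> range (\<lambda>x. matrix_inv S *v (H *v x)) \<and>
                 (H ** eki_cov H S y J v0 0 ** transpose H) *v w k = 0"
    and ker: "\<And>k. h \<le> k \<Longrightarrow> k < CARD('n) \<Longrightarrow> transpose H *v w k = 0"
    and ker_span: "span (w ` {h..<CARD('n)}) = {u. transpose H *v u = 0}"
    and ran_span: "span (w ` {0..<h}) = range (\<lambda>x. matrix_inv S *v (H *v x))"
  shows "\<forall>j\<in>{1..J}.
      (\<lambda>i. norm (proj_block S w 0 r *v (H *v eki H S y J v0 i j - y)))
          \<in> O(\<lambda>i. 1 / sqrt (real i))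
    \<and> (\<forall>i. proj_block S w r h *v (H *v eki H S y J v0 i j - y)
            = proj_block S w r h *v (H *v v0 j - y))
    \<and> (\<forall>i. proj_block S w h CARD('n) *v (H *v eki H S y J v0 i j - y)
            = proj_block S w h CARD('n) *v (H *v v0 j - y))"
proof -
  have J1: "J \<ge> 1" using J2 by simp
  have normalized: "w k \<bullet> (S *v w k) = 1" if "k < CARD('n)" for k
    using orth[OF that that] by simp
  have decay: "(\<lambda>i. w k \<bullet> (H *v eki H S y J v0 i j - y)) \<in> O(\<lambda>i. 1 / sqrt (real i))"
    if kr: "k < r" for j k
  proof -
    have "k < CARD('n)" using kr rh hn by simp
    moreover obtain d where "d > 0"
      "(H ** eki_cov H S y J v0 0 ** transpose H) *v w k = d *\<^sub>R (S *v w k)"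
      using pos[OF kr] by blast
    ultimately show ?thesis
      using eki_coefficient_decay[OF SPD J1 normalized eig_all] by blast
  qed
  have frozen: "w k \<bullet> (H *v eki H S y J v0 i j - y) = w k \<bullet> (H *v v0 j - y)"
    if "r \<le> k" "k < CARD('n)" for i j k
  proof -
    have "(H ** eki_cov H S y J v0 0 ** transpose H) *v w k = 0"
      using zero[OF that(1)] ker[OF _ that(2)]
      by (cases "k < h") (auto simp: matrix_vector_mul_assoc[symmetric])
    then show ?thesis
      using eki_coefficient_frozen[OF SPD J1 normalized[OF that(2)] eig_all[OF that(2)]] by blast
  qed
  show ?thesis
    unfolding proj_block_mult_vector
    using decay frozen rh hn by (auto intro!: norm_sum_scaleR_bigo sum.cong)
qed

end
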